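(* Assume [LJ1]–[LJ4]. Then $\frac12J_1(\delta_1)\le B_{IF}(m)\le\frac12J_1(\gamma)$ for every $m\in\mathbb N\cup\{+\infty\}$, and $B_b(\theta)\le\frac12J_1(\theta)$ for every $\theta>0$.
   Context: Potentials: $J_1,J_2:\mathbb R\to(-\infty,+\infty]$; $J_{CB}:=J_1+J_2$; $J_0(z):=J_2(z)+\frac12\inf\{J_1(z_1)+J_1(z_2):z_1+z_2=2z\}$; $J_0^{**}$ is the convex lower semicontinuous envelope of $J_0$. Hypotheses: [LJ1] $\{z:J_0(z)=J_0^{**}(z)\}\cap\{z:J_0\text{ is affine in a neighbourhood of }z\}=\emptyset$. [LJ2] for every $z$ with $J_0(z)=J_0^{**}(z)$, the set $\{(z_1,z_2):z_1+z_2=2z,\ J_0(z)=J_2(z)+\frac12(J_1(z_1)+J_1(z_2))\}$ has exactly one element. [LJ3] $J_1,J_2$ are $C^{1,\alpha}$ on their domains for some $0<\alpha\le1$, $J_0$ is $C^1$ on its domain, $\operatorname{dom}J_1=\operatorname{dom}J_2\supset(0,+\infty)$, $\lim_{z\to+\infty}J_j(z)=0$ ($j=1,2$) and $\lim_{z\to+\infty}J_0(z)=:J_0(+\infty)\in\mathbb R$. [LJ4] there is a convex $\Psi:\mathbb R\to[0,+\infty]$ with $\lim_{z\to-\infty}\Psi(z)/|z|=+\infty$ and constants $c_1,c_2>0$ with $c_1(\Psi(z)-1)\le J_j(z)\le c_2\max\{\Psi(z),|z|\}$ for all $z\in\mathbb R$, $j=1,2$; there are $\delta_1,\delta_2,\gamma>0$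 with $\{\delta_j\}=\operatorname{argmin}J_j$ and $\{\gamma\}=\operatorname{argmin}J_0$; $J_j$ is strictly convex on $(-\infty,\delta_j)\cap\operatorname{dom}J_j$; $J_0(\gamma)<J_0(+\infty)$; and $J_0(z)=J_0^{**}(z)$ for all $z\le\gamma$. Boundary layer energies (with $\mathbb N=\{0,1,2,\dots\}$): for $\theta>0$, $B_b(\theta):=\inf_{k\in\mathbb N}\min\{\frac12J_1(v^1-v^0)+\sum_{i=0}^{k-1}[J_2(\frac{v^{i+2}-v^i}{2})+\frac12J_1(v^{i+2}-v^{i+1})+\frac12J_1(v^{i+1}-v^i)-J_0(\gamma)]:v^{k+1}=0,\ v^{k+1}-v^k=\theta\}$; $B(\gamma):=\inf_{N\in\mathbb N}\min\{\frac12J_1(v^1-v^0)+\sum_{i\ge0}[J_2(\frac{v^{i+2}-v^i}{2})+\frac12J_1(v^{i+2}-v^{i+1})+\frac12J_1(v^{i+1}-v^i)-J_0(\gamma)]:v:\mathbb N\to\mathbb R,\ v^0=0,\ v^{i+1}-v^i=\gamma\ \forall i\ge N\}$; for $m\in\mathbb N$, $B_{IF}(m):=\inf_{k\in\mathbb N}\min\{\frac12J_1(v^1-v^0)+\sum_{i=0}^{k-1}[J_2(\frac{v^{i+2}-v^i}{2})+\frac12J_1(v^{i+2}-v^{i+1})+\frac12J_1(v^{i+1}-v^i)-J_0(\gamma)]+\frac{2m+1}{2}(J_{CB}(v^{k+1}-v^k)-J_0(\gamma)):v:\mathbb N\to\mathbb R,\ v^0=0\}$, and $B_{IF}(+\infty):=B(\gamma)$.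 *)

theory Defs
  imports "HOL-Analysis.Analysis"
begin

text \<open>Potentials are extended-real valued, never equal to minus infinity (values in (-inf,+inf]).
  The effective domain is the set where the value is finite.\<close>

definition edom :: "(real \<Rightarrow> ereal) \<Rightarrow> real set" where
  "edom f = {z. f z \<noteq> \<infinity>}"

definition J0 :: "(real \<Rightarrow> ereal) \<Rightarrow> (real \<Rightarrow> ereal) \<Rightarrow> real \<Rightarrow> ereal" where
  "J0 J1 J2 z = J2 z + ereal (1/2) * Inf {J1 z1 + J1 z2 | z1 z2. z1 + z2 = 2 * z}"

definition JCB :: "(real \<Rightarrow> ereal) \<Rightarrow> (real \<Rightarrow> ereal) \<Rightarrow> real \<Rightarrow> ereal" where
  "JCB J1 J2 z = J1 z + J2 z"

text \<open>Fenchel conjugate and biconjugate; the biconjugate is the convex lower semicontinuous envelope.\<close>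

definition fconj :: "(real \<Rightarrow> ereal) \<Rightarrow> real \<Rightarrow> ereal" where
  "fconj f p = (SUP z. ereal (p * z) - f z)"

definition fbiconj :: "(real \<Rightarrow> ereal) \<Rightarrow> real \<Rightarrow> ereal" where
  "fbiconj f z = (SUP p. ereal (p * z) - fconj f p)"

definition J0inf :: "(real \<Rightarrow> ereal) \<Rightarrow> (real \<Rightarrow> ereal) \<Rightarrow> ereal" where
  "J0inf J1 J2 = Lim at_top (J0 J1 J2)"

definition affine_near :: "(real \<Rightarrow> ereal) \<Rightarrow> real \<Rightarrow> bool" where
  "affine_near f z \<longleftrightarrow> (\<exists>e>0. \<exists>a b. \<forall>y. \<bar>y - z\<bar> < e \<longrightarrow> f y = ereal (a * y + b))"

definition C1alpha_on :: "real set \<Rightarrow> real \<Rightarrow> (real \<Rightarrow> ereal) \<Rightarrow> bool" where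
  "C1alpha_on S \<alpha> f \<longleftrightarrow> (\<exists>f'.
     (\<forall>z\<in>S. ((\<lambda>x. real_of_ereal (f x)) has_real_derivative f' z) (at z within S)) \<and>
     (\<forall>K. compact K \<and> K \<subseteq> S \<longrightarrow> (\<exists>L. \<forall>x\<in>K. \<forall>y\<in>K. \<bar>f' x - f' y\<bar> \<le> L * \<bar>x - y\<bar> powr \<alpha>)))"

definition C1_on :: "real set \<Rightarrow> (real \<Rightarrow> ereal) \<Rightarrow> bool" where
  "C1_on S f \<longleftrightarrow> (\<exists>f'.
     (\<forall>z\<in>S. ((\<lambda>x. real_of_ereal (f x)) has_real_derivative f' z) (at z within S)) \<and>
     continuous_on S f')"

definition econvex :: "(real \<Rightarrow> ereal) \<Rightarrow> bool" where
  "econvex f \<longleftrightarrow> (\<forall>x y t. 0 \<le> t \<and> t \<le> 1 \<longrightarrow>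
      f ((1 - t) * x + t * y) \<le> ereal (1 - t) * f x + ereal t * f y)"

definition estrict_convex_on :: "real set \<Rightarrow> (real \<Rightarrow> ereal) \<Rightarrow> bool" where
  "estrict_convex_on S f \<longleftrightarrow> (\<forall>x\<in>S. \<forall>y\<in>S. \<forall>t. x \<noteq> y \<and> 0 < t \<and> t < 1 \<longrightarrow>
      f ((1 - t) * x + t * y) < ereal (1 - t) * f x + ereal t * f y)"

definition LJ1 :: "(real \<Rightarrow> ereal) \<Rightarrow> (real \<Rightarrow> ereal) \<Rightarrow> bool" where
  "LJ1 J1 J2 \<longleftrightarrow>
     {z. J0 J1 J2 z = fbiconj (J0 J1 J2) z} \<inter> {z. affine_near (J0 J1 J2) z} = {}"

text \<open>LJ2 is read for z in the effective domain of J0.\<close>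

definition LJ2 :: "(real \<Rightarrow> ereal) \<Rightarrow> (real \<Rightarrow> ereal) \<Rightarrow> bool" where
  "LJ2 J1 J2 \<longleftrightarrow> (\<forall>z. J0 J1 J2 z = fbiconj (J0 J1 J2) z \<and> z \<in> edom (J0 J1 J2) \<longrightarrow>
     (\<exists>!p. fst p + snd p = 2 * z \<and>
            J0 J1 J2 z = J2 z + ereal (1/2) * (J1 (fst p) + J1 (snd p))))"

definition LJ3 :: "(real \<Rightarrow> ereal) \<Rightarrow> (real \<Rightarrow> ereal) \<Rightarrow> bool" where
  "LJ3 J1 J2 \<longleftrightarrow>
     (\<exists>\<alpha>. 0 < \<alpha> \<and> \<alpha> \<le> 1 \<and> C1alpha_on (edom J1) \<alpha> J1 \<and> C1alpha_on (edom J2) \<alpha> J2) \<and>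
     C1_on (edom (J0 J1 J2)) (J0 J1 J2) \<and>
     edom J1 = edom J2 \<and> {0<..} \<subseteq> edom J1 \<and>
     (J1 \<longlongrightarrow> 0) at_top \<and> (J2 \<longlongrightarrow> 0) at_top \<and>
     (\<exists>r::real. (J0 J1 J2 \<longlongrightarrow> ereal r) at_top)"

definition LJ4 :: "(real \<Rightarrow> ereal) \<Rightarrow> (real \<Rightarrow> ereal) \<Rightarrow> real \<Rightarrow> real \<Rightarrow> real \<Rightarrow> bool" where
  "LJ4 J1 J2 \<delta>1 \<delta>2 \<gamma> \<longleftrightarrow>
     (\<exists>\<Psi> :: real \<Rightarrow> ereal. econvex \<Psi> \<and> (\<forall>z. 0 \<le> \<Psi> z) \<and>
        ((\<lambda>z. \<Psi> z / ereal \<bar>z\<bar>) \<longlongrightarrow> \<infinity>) at_bot \<and>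
        (\<exists>c1 c2. c1 > 0 \<and> c2 > 0 \<and>
           (\<forall>z. \<forall>J \<in> {J1, J2}. ereal c1 * (\<Psi> z - 1) \<le> J z \<and>
                                J z \<le> ereal c2 * max (\<Psi> z) (ereal \<bar>z\<bar>)))) \<and>
     \<delta>1 > 0 \<and> \<delta>2 > 0 \<and> \<gamma> > 0 \<and>
     {z. \<forall>y. J1 z \<le> J1 y} = {\<delta>1} \<and>
     {z. \<forall>y. J2 z \<le> J2 y} = {\<delta>2} \<and>
     {z. \<forall>y. J0 J1 J2 z \<le> J0 J1 J2 y} = {\<gamma>} \<and>
     estrict_convex_on ({..<\<delta>1} \<inter> edom J1) J1 \<and>
     estrict_convex_on ({..<\<delta>2} \<inter> edom J2) J2 \<and>
     J0 J1 J2 \<gamma> < J0inf J1 J2 \<and>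
     (\<forall>z\<le>\<gamma>. J0 J1 J2 z = fbiconj (J0 J1 J2) z)"

definition cell :: "(real \<Rightarrow> ereal) \<Rightarrow> (real \<Rightarrow> ereal) \<Rightarrow> real \<Rightarrow> (nat \<Rightarrow> real) \<Rightarrow> nat \<Rightarrow> ereal" where
  "cell J1 J2 \<gamma> v i = J2 ((v (i+2) - v i) / 2) + ereal (1/2) * J1 (v (i+2) - v (i+1))
      + ereal (1/2) * J1 (v (i+1) - v i) - J0 J1 J2 \<gamma>"

definition Bb :: "(real \<Rightarrow> ereal) \<Rightarrow> (real \<Rightarrow> ereal) \<Rightarrow> real \<Rightarrow> real \<Rightarrow> ereal" where
  "Bb J1 J2 \<gamma> \<theta> = Inf {ereal (1/2) * J1 (v 1 - v 0) + (\<Sum>i<k. cell J1 J2 \<gamma> v i) | k v.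
      v (k+1) = 0 \<and> v (k+1) - v k = \<theta>}"

definition Bgamma :: "(real \<Rightarrow> ereal) \<Rightarrow> (real \<Rightarrow> ereal) \<Rightarrow> real \<Rightarrow> ereal" where
  "Bgamma J1 J2 \<gamma> = Inf {ereal (1/2) * J1 (v 1 - v 0) + (\<Sum>i. cell J1 J2 \<gamma> v i) | N v.
      v 0 = 0 \<and> (\<forall>i\<ge>N. v (i+1) - v i = \<gamma>)}"

definition BIF :: "(real \<Rightarrow> ereal) \<Rightarrow> (real \<Rightarrow> ereal) \<Rightarrow> real \<Rightarrow> enat \<Rightarrow> ereal" where
  "BIF J1 J2 \<gamma> m = (case m of
      enat n \<Rightarrow> Inf {ereal (1/2) * J1 (v 1 - v 0) + (\<Sum>i<k. cell J1 J2 \<gamma> v i)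
                 + ereal (real (2*n+1) / 2) * (JCB J1 J2 (v (k+1) - v k) - J0 J1 J2 \<gamma>) | k v.
                 v 0 = 0}
    | \<infinity> \<Rightarrow> Bgamma J1 J2 \<gamma>)"

end

theory Submission
  imports Defs
begin

text \<open>
  Every boundary-layer energy is an infimum of sums of the form
  1/2 J1(v1 - v0) + (cells) + (nonnegative tail), and two facts about the
  minimiser gamma of J0 control all of them:
  (a) J0 gamma is finite and minimal, so each cell
      J2((v(i+2)-v(i))/2) + 1/2 J1(..) + 1/2 J1(..) - J0 gamma is nonnegative
      (the three J-terms dominate J0 at the midpoint), and likewise
      J_CB(w) - J0 gamma >= 0 (J_CB(w) dominates J0(w)).
  (b) By [LJ2] the optimal splitting of 2 gamma is unique; since it is
      symmetric it must be (gamma, gamma), hence J0 gamma = J_CB gamma and the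
      affine profile of slope gamma has cells equal to zero.
  Lower bounds: drop the nonnegative terms and use J1 >= J1 delta1.
  Upper bounds: test the infima with the one-step profile (k = 0) resp. the
  affine profile of slope gamma.
\<close>

lemma ereal_half_distrib: "ereal (1/2) * ((x::ereal) + y) = ereal (1/2) * x + ereal (1/2) * y"
  by (cases x; cases y; simp)

lemma ereal_half_double: "(x::ereal) \<noteq> -\<infinity> \<Longrightarrow> ereal (1/2) * (x + x) = x"
  by (cases x) auto

lemma ereal_diff_nonneg: "ereal r \<le> (x::ereal) \<Longrightarrow> 0 \<le> x - ereal r"
  by (cases x) auto

lemma J0_le_split:
  assumes "a + b = 2 * z"
  shows "J0 J1 J2 z \<le> J2 z + ereal (1/2) * J1 a + ereal (1/2) * J1 b"
proof -
  have "Inf {J1 z1 + J1 z2 | z1 z2. z1 + z2 = 2 * z} \<le> J1 a + J1 b"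
    by (rule Inf_lower) (use assms in blast)
  hence "ereal (1/2) * Inf {J1 z1 + J1 z2 | z1 z2. z1 + z2 = 2 * z} \<le> ereal (1/2) * (J1 a + J1 b)"
    by (rule ereal_mult_left_mono) simp
  thus ?thesis unfolding J0_def ereal_half_distrib by (simp add: add.assoc add_left_mono)
qed

text \<open>The trivial splitting (w, w) shows that J0 lies below the Cauchy--Born energy.\<close>

lemma J0_le_JCB:
  assumes "J1 w \<noteq> -\<infinity>"
  shows "J0 J1 J2 w \<le> JCB J1 J2 w"
proof -
  have "J0 J1 J2 w \<le> J2 w + ereal (1/2) * (J1 w + J1 w)"
    using J0_le_split[of w w w J1 J2] by (simp add: ereal_half_distrib add.assoc)
  thus ?thesis using assms by (simp add: ereal_half_double JCB_def add.commute)
qed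

text \<open>If the optimal splitting of 2z is unique, then by symmetry it is (z, z),
  so J0 and J_CB agree at z.\<close>

lemma J0_eq_JCB_if_unique_split:
  assumes unique: "\<exists>!p. fst p + snd p = 2 * z \<and>
                        J0 J1 J2 z = J2 z + ereal (1/2) * (J1 (fst p) + J1 (snd p))"
    and "J1 z \<noteq> -\<infinity>"
  shows "J0 J1 J2 z = JCB J1 J2 z"
proof -
  obtain p where opt: "fst p + snd p = 2 * z"
      "J0 J1 J2 z = J2 z + ereal (1/2) * (J1 (fst p) + J1 (snd p))"
    and uniq: "\<And>q. fst q + snd q = 2 * z \<and>
                   J0 J1 J2 z = J2 z + ereal (1/2) * (J1 (fst q) + J1 (snd q)) \<Longrightarrow> q = p"
    using unique by blast
  have "(snd p, fst p) = p"
    by (rule uniq) (use opt in \<open>auto simp: add.commute\<close>)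
  hence "fst p = snd p" by (metis fst_conv snd_conv prod.collapse)
  hence "fst p = z" "snd p = z" using opt(1) by auto
  thus ?thesis
    using opt(2) assms(2) by (simp add: ereal_half_double JCB_def add.commute)
qed

lemma cell_nonneg:
  assumes min: "\<forall>y. J0 J1 J2 \<gamma> \<le> J0 J1 J2 y" and fin: "J0 J1 J2 \<gamma> = ereal r"
  shows "0 \<le> cell J1 J2 \<gamma> v i"
proof -
  let ?z = "(v (i+2) - v i) / 2"
  have "ereal r \<le> J0 J1 J2 ?z"
    using min unfolding fin by blast
  also have "\<dots> \<le> J2 ?z + ereal (1/2) * J1 (v (i+2) - v (i+1)) + ereal (1/2) * J1 (v (i+1) - v i)"
    by (rule J0_le_split) simp
  finally show ?thesis
    unfolding cell_def fin by (rule ereal_diff_nonneg)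
qed

lemma JCB_excess_nonneg:
  assumes min: "\<forall>y. J0 J1 J2 \<gamma> \<le> J0 J1 J2 y" and fin: "J0 J1 J2 \<gamma> = ereal r"
    and "J1 w \<noteq> -\<infinity>"
  shows "0 \<le> JCB J1 J2 w - J0 J1 J2 \<gamma>"
proof -
  have "ereal r \<le> J0 J1 J2 w"
    using min unfolding fin by blast
  also have "\<dots> \<le> JCB J1 J2 w"
    using assms(3) by (rule J0_le_JCB)
  finally show ?thesis
    unfolding fin by (rule ereal_diff_nonneg)
qed

lemma cell_affine_zero:
  assumes JCB_eq: "J0 J1 J2 \<gamma> = JCB J1 J2 \<gamma>" and fin: "J0 J1 J2 \<gamma> = ereal r"
    and "J1 \<gamma> \<noteq> -\<infinity>"
  shows "cell J1 J2 \<gamma> (\<lambda>i. \<gamma> * real i) i = 0"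
proof -
  have "cell J1 J2 \<gamma> (\<lambda>i. \<gamma> * real i) i = J2 \<gamma> + ereal (1/2) * (J1 \<gamma> + J1 \<gamma>) - J0 J1 J2 \<gamma>"
    unfolding cell_def ereal_half_distrib by (simp add: algebra_simps)
  also have "J2 \<gamma> + ereal (1/2) * (J1 \<gamma> + J1 \<gamma>) = JCB J1 J2 \<gamma>"
    using assms(3) by (simp add: ereal_half_double JCB_def add.commute)
  also have "JCB J1 J2 \<gamma> - J0 J1 J2 \<gamma> = ereal r - ereal r"
    by (simp only: JCB_eq[symmetric] fin)
  finally show ?thesis by simp
qed

text \<open>Lower bound for the finite interface energies: all terms but the first are nonnegative.\<close>

lemma BIF_finite_lower:
  assumes min1: "\<forall>y. J1 \<delta>1 \<le> J1 y"
    and min0: "\<forall>y. J0 J1 J2 \<gamma> \<le> J0 J1 J2 y" and fin: "J0 J1 J2 \<gamma> = ereal r"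
    and J1_proper: "\<forall>z. J1 z \<noteq> -\<infinity>"
  shows "ereal (1/2) * J1 \<delta>1 \<le> BIF J1 J2 \<gamma> (enat n)"
  unfolding BIF_def enat.case
proof (rule Inf_greatest, clarify)
  fix k and v :: "nat \<Rightarrow> real"
  have "0 \<le> (\<Sum>i<k. cell J1 J2 \<gamma> v i)"
    by (rule sum_nonneg) (use cell_nonneg[OF min0 fin] in auto)
  moreover have "0 \<le> ereal (real (2*n+1) / 2) * (JCB J1 J2 (v (k+1) - v k) - J0 J1 J2 \<gamma>)"
    using JCB_excess_nonneg[OF min0 fin] J1_proper by (intro ereal_0_le_mult) auto
  moreover have "ereal (1/2) * J1 \<delta>1 \<le> ereal (1/2) * J1 (v 1 - v 0)"
    using min1 by (intro ereal_mult_left_mono) auto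
  ultimately show "ereal (1/2) * J1 \<delta>1 \<le> ereal (1/2) * J1 (v 1 - v 0) + (\<Sum>i<k. cell J1 J2 \<gamma> v i)
      + ereal (real (2*n+1) / 2) * (JCB J1 J2 (v (k+1) - v k) - J0 J1 J2 \<gamma>)"
    by (simp add: add_increasing2)
qed

text \<open>Upper bound for the finite interface energies: the one-step profile of slope gamma.\<close>

lemma BIF_finite_upper:
  assumes JCB_eq: "J0 J1 J2 \<gamma> = JCB J1 J2 \<gamma>" and fin: "J0 J1 J2 \<gamma> = ereal r"
  shows "BIF J1 J2 \<gamma> (enat n) \<le> ereal (1/2) * J1 \<gamma>"
  unfolding BIF_def enat.case
proof (rule Inf_lower2)
  let ?v = "\<lambda>i::nat. \<gamma> * real i"
  let ?e = "ereal (1/2) * J1 (?v 1 - ?v 0) + (\<Sum>i<0. cell J1 J2 \<gamma> ?v i)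
            + ereal (real (2*n+1) / 2) * (JCB J1 J2 (?v (0+1) - ?v 0) - J0 J1 J2 \<gamma>)"
  show "?e \<in> {ereal (1/2) * J1 (v 1 - v 0) + (\<Sum>i<k. cell J1 J2 \<gamma> v i)
                 + ereal (real (2*n+1) / 2) * (JCB J1 J2 (v (k+1) - v k) - J0 J1 J2 \<gamma>) | k v.
                 v 0 = 0}"
    by (intro CollectI exI[of _ 0] exI[of _ ?v]) simp
  have "JCB J1 J2 \<gamma> = ereal r"
    by (simp only: JCB_eq[symmetric] fin)
  thus "?e \<le> ereal (1/2) * J1 \<gamma>"
    using fin by simp
qed

text \<open>Lower bound for B(gamma): the series of cells is nonnegative.\<close>

lemma Bgamma_lower:
  assumes min1: "\<forall>y. J1 \<delta>1 \<le> J1 y"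
    and min0: "\<forall>y. J0 J1 J2 \<gamma> \<le> J0 J1 J2 y" and fin: "J0 J1 J2 \<gamma> = ereal r"
  shows "ereal (1/2) * J1 \<delta>1 \<le> Bgamma J1 J2 \<gamma>"
  unfolding Bgamma_def
proof (rule Inf_greatest, clarify)
  fix N and v :: "nat \<Rightarrow> real"
  have "0 \<le> (\<Sum>i. cell J1 J2 \<gamma> v i)"
    using cell_nonneg[OF min0 fin] by (simp add: suminf_nonneg summable_ereal_pos)
  moreover have "ereal (1/2) * J1 \<delta>1 \<le> ereal (1/2) * J1 (v 1 - v 0)"
    using min1 by (intro ereal_mult_left_mono) auto
  ultimately show "ereal (1/2) * J1 \<delta>1 \<le> ereal (1/2) * J1 (v 1 - v 0) + (\<Sum>i. cell J1 J2 \<gamma> v i)"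
    by (simp add: add_increasing2)
qed

text \<open>Upper bound for B(gamma): the affine profile of slope gamma has no cell energy.\<close>

lemma Bgamma_upper:
  assumes "J0 J1 J2 \<gamma> = JCB J1 J2 \<gamma>" "J0 J1 J2 \<gamma> = ereal r" "J1 \<gamma> \<noteq> -\<infinity>"
  shows "Bgamma J1 J2 \<gamma> \<le> ereal (1/2) * J1 \<gamma>"
  unfolding Bgamma_def
proof (rule Inf_lower2)
  let ?v = "\<lambda>i::nat. \<gamma> * real i"
  show "ereal (1/2) * J1 (?v 1 - ?v 0) + (\<Sum>i. cell J1 J2 \<gamma> ?v i)
      \<in> {ereal (1/2) * J1 (v 1 - v 0) + (\<Sum>i. cell J1 J2 \<gamma> v i) | N v.
         v 0 = 0 \<and> (\<forall>i\<ge>N. v (i+1) - v i = \<gamma>)}"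
    by (intro CollectI exI[of _ 0] exI[of _ ?v]) (simp add: algebra_simps)
  show "ereal (1/2) * J1 (?v 1 - ?v 0) + (\<Sum>i. cell J1 J2 \<gamma> ?v i) \<le> ereal (1/2) * J1 \<gamma>"
    using cell_affine_zero[OF assms] by simp
qed

text \<open>Upper bound for B_b(theta): the profile with a single bond of length theta (k = 0).\<close>

lemma Bb_upper: "Bb J1 J2 \<gamma> \<theta> \<le> ereal (1/2) * J1 \<theta>"
  unfolding Bb_def
proof (rule Inf_lower2)
  let ?v = "\<lambda>i::nat. if i = 0 then - \<theta> else 0"
  show "ereal (1/2) * J1 (?v 1 - ?v 0) + (\<Sum>i<0. cell J1 J2 \<gamma> ?v i)
      \<in> {ereal (1/2) * J1 (v 1 - v 0) + (\<Sum>i<k. cell J1 J2 \<gamma> v i) | k v.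
         v (k+1) = 0 \<and> v (k+1) - v k = \<theta>}"
    by (intro CollectI exI[of _ 0] exI[of _ ?v]) simp
qed simp

lemma minimiser_facts:
  assumes J1_proper: "\<forall>z. J1 z \<noteq> -\<infinity>" and J2_proper: "\<forall>z. J2 z \<noteq> -\<infinity>"
    and "LJ2 J1 J2" and L4: "LJ4 J1 J2 \<delta>1 \<delta>2 \<gamma>"
  shows "\<forall>y. J1 \<delta>1 \<le> J1 y" "\<forall>y. J0 J1 J2 \<gamma> \<le> J0 J1 J2 y"
    and "J0 J1 J2 \<gamma> = JCB J1 J2 \<gamma>" "\<exists>r. J0 J1 J2 \<gamma> = ereal r"
proof -
  have argmins: "{z. \<forall>y. J1 z \<le> J1 y} = {\<delta>1}" "{z. \<forall>y. J0 J1 J2 z \<le> J0 J1 J2 y} = {\<gamma>}"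
    using L4 unfolding LJ4_def by blast+
  show "\<forall>y. J1 \<delta>1 \<le> J1 y" "\<forall>y. J0 J1 J2 \<gamma> \<le> J0 J1 J2 y"
    using argmins by blast+
  have "J0 J1 J2 \<gamma> < J0inf J1 J2" "J0 J1 J2 \<gamma> = fbiconj (J0 J1 J2) \<gamma>"
    using L4 unfolding LJ4_def by auto
  hence not_inf: "J0 J1 J2 \<gamma> \<noteq> \<infinity>" and "J0 J1 J2 \<gamma> = fbiconj (J0 J1 J2) \<gamma> \<and> \<gamma> \<in> edom (J0 J1 J2)"
    unfolding edom_def by auto
  with \<open>LJ2 J1 J2\<close> show eq: "J0 J1 J2 \<gamma> = JCB J1 J2 \<gamma>"
    using J0_eq_JCB_if_unique_split J1_proper unfolding LJ2_def by blast
  have "JCB J1 J2 \<gamma> \<noteq> -\<infinity>"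
    using J1_proper J2_proper unfolding JCB_def by simp
  then obtain s where "JCB J1 J2 \<gamma> = ereal s"
    using not_inf eq by (cases "JCB J1 J2 \<gamma>") auto
  thus "\<exists>r. J0 J1 J2 \<gamma> = ereal r"
    using eq by simp
qed

theorem lemma5p2:
  fixes J1 J2 :: "real \<Rightarrow> ereal" and \<delta>1 \<delta>2 \<gamma> :: real
  assumes "\<forall>z. J1 z \<noteq> -\<infinity>" and "\<forall>z. J2 z \<noteq> -\<infinity>"
    and "LJ1 J1 J2" and "LJ2 J1 J2" and "LJ3 J1 J2" and "LJ4 J1 J2 \<delta>1 \<delta>2 \<gamma>"
  shows "(\<forall>m::enat. ereal (1/2) * J1 \<delta>1 \<le> BIF J1 J2 \<gamma> m \<and> BIF J1 J2 \<gamma> m \<le> ereal (1/2) * J1 \<gamma>)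
       \<and> (\<forall>\<theta>>0. Bb J1 J2 \<gamma> \<theta> \<le> ereal (1/2) * J1 \<theta>)"
proof -
  note facts = minimiser_facts[OF assms(1,2,4,6)]
  obtain r where fin: "J0 J1 J2 \<gamma> = ereal r" using facts(4) by blast
  have "ereal (1/2) * J1 \<delta>1 \<le> BIF J1 J2 \<gamma> m \<and> BIF J1 J2 \<gamma> m \<le> ereal (1/2) * J1 \<gamma>" for m
  proof (cases m)
    case (enat n)
    then show ?thesis
      using BIF_finite_lower[OF facts(1,2) fin assms(1)] BIF_finite_upper[OF facts(3) fin] by simp
  next
    case infinity
    then show ?thesis
      using Bgamma_lower[OF facts(1,2) fin] Bgamma_upper[OF facts(3) fin] assms(1)
      by (simp add: BIF_def)
  qed
  thus ?thesis using Bb_upper by blast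
qed

end
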